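(* Let $q\in(0,1)$, let $\alpha,p,j\ge0$ be integers and $0\le t\le p$. Then $$\sum_{M\in M^{(\alpha)}_{p,j}(t)}q^{\mathrm{cr}(M)}=\sum_{l=0}^{t}\sum_{i=0}^{l}q^{\,i(l-i)+(t-i)(j-i+\alpha)+(j-l+i)(t-l+i)}\frac{[t-l+i]_q!\,[t-i]_q!}{[t-l]_q!}\begin{bmatrix} p\\ t-i\end{bmatrix}_q\begin{bmatrix} p\\ t-l+i\end{bmatrix}_q\begin{bmatrix} \alpha+j\\ i\end{bmatrix}_q\begin{bmatrix} j\\ l-i\end{bmatrix}_q.$$
   Context: $[n]_q=\frac{1-q^n}{1-q}$, $[n]_q!=\prod_{m=1}^n[m]_q$, $\begin{bmatrix} n\\ m\end{bmatrix}_q=\frac{[n]_q!}{[m]_q![n-m]_q!}$ for $0\le m\le n$ and $=0$ if $m>n$ or $m<0$. Bipartite matchings: for integers $n,j,\alpha\ge0$, let $T_-=\{-\alpha-j,\dots,-1\}$, $T_+=\{1,\dots,n\}$ (top row), $B_-=\{-\tilde j,\dots,-\tilde 1\}$, $B_+=\{\tilde1,\dots,\tilde n\}$ (bottom row; $\tilde m$ is a formal copy of the integer $m$, bottom vertices compared via these integers). A bipartite matching is a set partition of $T_-\cup T_+\cup B_-\cup B_+$ into singletons (isolated vertices) and blocks $\{a,\tilde b\}$ with $a$ top, $\tilde b$ bottom (edges, written $(a,\tilde b)$). $M^{(\alpha)}_{n,j}$ is the set of such matchings with no edge between $T_-$ and $B_-$; $M^{(\alpha)}_{n,j}(l)$ its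 subset with exactly $l$ edges. The crossing number $\mathrm{cr}(M)$ is the total number of: (C1) unordered pairs of edges $(a,\tilde b),(c,\tilde d)$ with $a<c$ and $d<b$; (C2) pairs of an edge $(a,\tilde b)$ and an isolated top vertex $c$ with $c<a$; (C3) pairs of an edge $(a,\tilde b)$ and an isolated bottom vertex $\tilde d$ with $d<b$. *)

theory Defs
  imports Complex_Main
begin

definition qint :: "real \<Rightarrow> nat \<Rightarrow> real" where
  "qint q n = (1 - q ^ n) / (1 - q)"

definition qfact :: "real \<Rightarrow> nat \<Rightarrow> real" where
  "qfact q n = (\<Prod>m = 1..n. qint q m)"

definition qbinom :: "real \<Rightarrow> int \<Rightarrow> int \<Rightarrow> real" where
  "qbinom q n m = (if 0 \<le> m \<and> m \<le> n
      then qfact q (nat n) / (qfact q (nat m) * qfact q (nat (n - m))) else 0)"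

text \<open>Top row: T_- = {-alpha-j..-1}, T_+ = {1..n}; bottom row B_- = {-j..-1}, B_+ = {1..n}.
  Vertices are represented by integers (bottom copies are the same integers in a separate set).\<close>
definition top_row :: "nat \<Rightarrow> nat \<Rightarrow> nat \<Rightarrow> int set" where
  "top_row \<alpha> n j = {-(int \<alpha> + int j)..-1} \<union> {1..int n}"

definition bot_row :: "nat \<Rightarrow> nat \<Rightarrow> int set" where
  "bot_row n j = {-(int j)..-1} \<union> {1..int n}"

text \<open>A bipartite matching is determined by its set of edges (a, b~): a partial bijection
  between top and bottom vertices; all other vertices are singletons.
  No edge joins T_- and B_-.\<close>
definition matchings :: "nat \<Rightarrow> nat \<Rightarrow> nat \<Rightarrow> (int \<times> int) set set" where
  "matchings \<alpha> n j = {E. E \<subseteq> top_row \<alpha> n j \<times> bot_row n j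
      \<and> (\<forall>(a,b)\<in>E. \<forall>(c,d)\<in>E. (a = c \<longleftrightarrow> b = d))
      \<and> (\<forall>(a,b)\<in>E. \<not> (a < 0 \<and> b < 0))}"

definition matchings_l :: "nat \<Rightarrow> nat \<Rightarrow> nat \<Rightarrow> nat \<Rightarrow> (int \<times> int) set set" where
  "matchings_l \<alpha> n j l = {E \<in> matchings \<alpha> n j. card E = l}"

definition cr :: "nat \<Rightarrow> nat \<Rightarrow> nat \<Rightarrow> (int \<times> int) set \<Rightarrow> nat" where
  "cr \<alpha> n j E =
     card {((a,b),(c,d)). (a,b) \<in> E \<and> (c,d) \<in> E \<and> a < c \<and> d < b}
   + card {((a,b),c). (a,b) \<in> E \<and> c \<in> top_row \<alpha> n j - fst ` E \<and> c < a}
   + card {((a,b),d). (a,b) \<in> E \<and> d \<in> bot_row n j - snd ` E \<and> d < b}"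

end

(*
  Deleting the leftmost top vertex x of a matching gives a recursion for the q^cr-weighted count
  of matchings with t edges between two finite vertex sets: if x is isolated it lies left of every
  edge, so each edge loses one crossing; if x is matched to b, that edge crosses exactly the
  bottom vertices left of b (matched or not) and nothing else, and summing q^(rank of b) over
  the admissible b produces a q-integer. Negative top vertices can only be matched to
  nonnegative bottom vertices, so the recursion is solved by a sum over the number i of
  matched negative top vertices, whose summands are products of q-binomials and q-falling
  factorials; without negative top vertices it is just Pascal's rule. Expanding one q-binomial
  of the i-th summand by q-Vandermonde and reindexing along diagonals gives the stated double sum.
*)

theory Submission
  imports Defs
begin

section \<open>q-binomial coefficients\<close>

definition qbin :: "real \<Rightarrow> nat \<Rightarrow> nat \<Rightarrow> real" where
  "qbin q n k = (if k \<le> n then qfact q n / (qfact q k * qfact q (n - k)) else 0)"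

definition qfalling :: "real \<Rightarrow> nat \<Rightarrow> nat \<Rightarrow> real" where
  "qfalling q n k = qbin q n k * qfact q k"

lemma qbinom_of_nat: "qbinom q (int n) (int k) = qbin q n k"
  by (simp add: qbinom_def qbin_def nat_diff_distrib)

lemma qfact_0 [simp]: "qfact q 0 = 1"
  by (simp add: qfact_def)

lemma qfact_Suc: "qfact q (Suc n) = qfact q n * qint q (Suc n)"
  by (simp add: qfact_def prod.nat_ivl_Suc')

lemma qbin_eq_0 [simp]: "n < k \<Longrightarrow> qbin q n k = 0"
  by (simp add: qbin_def)

lemma qfalling_eq_0 [simp]: "n < k \<Longrightarrow> qfalling q n k = 0"
  by (simp add: qfalling_def)

lemma qint_add: "q \<noteq> 1 \<Longrightarrow> qint q (m + n) = qint q m + q ^ m * qint q n"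
  by (simp add: qint_def power_add field_simps)

lemma qint_eq_sum_power: "q \<noteq> 1 \<Longrightarrow> qint q n = (\<Sum>k<n. q ^ k)"
  by (simp add: qint_def sum_gp_strict)

lemma diff_mult_diff_shift:
  fixes j k m :: nat
  assumes "k < j" "k \<le> m"
  shows "(j - k) * (m - k) + Suc k = Suc m + (j - Suc k) * (m - k)"
proof -
  have "(j - k) * (m - k) = (j - Suc k) * (m - k) + (m - k)"
    using assms(1) by (metis Suc_diff_Suc add.commute mult_Suc)
  then show ?thesis using assms(2) by simp
qed

context
  fixes q :: real
  assumes q_pos: "0 < q" and q_ne_1: "q \<noteq> 1"
begin

lemma qint_Suc_pos: "0 < qint q (Suc n)"
proof -
  have "1 \<le> (\<Sum>k<Suc n. q ^ k)"
    unfolding sum.lessThan_Suc_shift using q_pos by (simp add: sum_nonneg)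
  then show ?thesis using q_ne_1 by (simp add: qint_eq_sum_power)
qed

lemma qfact_pos: "0 < qfact q n"
  by (induction n) (simp_all add: qfact_Suc qint_Suc_pos)

lemma qbin_0 [simp]: "qbin q n 0 = 1"
  using qfact_pos[of n] by (simp add: qbin_def)

lemma qbin_Suc_Suc:
  "qbin q (Suc n) (Suc k) = qbin q n k + q ^ Suc k * qbin q n (Suc k)"
proof (cases "k < n")
  case True
  then obtain d where n: "n = Suc k + d"
    by (metis add_Suc less_imp_Suc_add)
  have split: "qint q (Suc n) = qint q (Suc k) + q ^ Suc k * qint q (Suc d)"
    using qint_add[OF q_ne_1, of "Suc k" "Suc d"] n by simp
  have "n - k = Suc d" "n - Suc k = d" using n by auto
  then show ?thesis
    using True split qfact_pos[of n] qfact_pos[of k] qfact_pos[of d]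
      qint_Suc_pos[of k] qint_Suc_pos[of d]
    by (simp add: qbin_def qfact_Suc field_simps)
next
  case False
  then show ?thesis
    using qfact_pos[of n] qint_Suc_pos[of n] by (cases "k = n") (auto simp: qbin_def qfact_Suc)
qed

lemma qfalling_0 [simp]: "qfalling q n 0 = 1"
  by (simp add: qfalling_def)

lemma qfalling_Suc_Suc: "qfalling q (Suc n) (Suc k) = qint q (Suc n) * qfalling q n k"
proof (cases "k \<le> n")
  case True
  then show ?thesis
    using qfact_pos[of n] qfact_pos[of k] qfact_pos[of "n - k"] qint_Suc_pos[of k] qint_Suc_pos[of n]
    by (simp add: qfalling_def qbin_def qfact_Suc field_simps)
qed (simp add: qfalling_def)

lemma qfalling_Suc_right: "qfalling q n (Suc k) = qint q n * qfalling q (n - 1) k"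
  by (cases n) (simp_all add: qfalling_Suc_Suc qint_def)

lemma qfalling_mult_qbin:
  "qfalling q p i * qbin q (p - i) a = qfact q (i + a) / qfact q a * qbin q p (i + a)"
proof (cases "i + a \<le> p")
  case True
  then have "p - i - a = p - (i + a)" "a \<le> p - i" by simp_all
  then show ?thesis
    using True qfact_pos[of a] qfact_pos[of "p - i"] qfact_pos[of "p - (i + a)"] qfact_pos[of i]
      qfact_pos[of "i + a"]
    by (simp add: qfalling_def qbin_def field_simps)
qed (auto simp: qfalling_def qbin_def)

lemma power_qbin_shift:
  assumes "k \<le> m"
  shows "q ^ ((j - k) * (m - k)) * q ^ Suc k * qbin q j (Suc k)
       = q ^ Suc m * q ^ ((j - Suc k) * (m - k)) * qbin q j (Suc k)"
proof (cases "k < j")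
  case True
  then show ?thesis
    using diff_mult_diff_shift[OF True assms] by (metis power_add)
qed simp

lemma qbin_Vandermonde:
  "qbin q (j + N) m = (\<Sum>k=0..m. q ^ ((j - k) * (m - k)) * qbin q j k * qbin q N (m - k))"
proof (induction j arbitrary: m)
  case 0
  show ?case
    by (cases m) (simp_all add: sum.atLeast0_atMost_Suc_shift del: sum.cl_ivl_Suc)
next
  case (Suc j)
  note IH = Suc.IH
  show ?case
  proof (cases m)
    case 0
    then show ?thesis by simp
  next
    case (Suc n)
    define V where "V j m = (\<Sum>k=0..m. q ^ ((j - k) * (m - k)) * qbin q j k * qbin q N (m - k))"
      for j m
    define W where "W = (\<Sum>k=0..n. q ^ ((j - Suc k) * (n - k)) * qbin q j (Suc k) * qbin q N (n - k))"
    have V_Suc: "V j' (Suc n) = q ^ (j' * Suc n) * qbin q N (Suc n)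
        + (\<Sum>k=0..n. q ^ ((j' - Suc k) * (n - k)) * qbin q j' (Suc k) * qbin q N (n - k))" for j'
      unfolding V_def by (simp add: sum.atLeast0_atMost_Suc_shift del: sum.cl_ivl_Suc)
    have "(\<Sum>k=0..n. q ^ ((Suc j - Suc k) * (n - k)) * qbin q (Suc j) (Suc k) * qbin q N (n - k))
        = V j n + (\<Sum>k=0..n. q ^ ((j - k) * (n - k)) * q ^ Suc k * qbin q j (Suc k) * qbin q N (n - k))"
      unfolding V_def sum.distrib[symmetric]
      by (rule sum.cong) (simp_all add: qbin_Suc_Suc algebra_simps)
    also have "(\<Sum>k=0..n. q ^ ((j - k) * (n - k)) * q ^ Suc k * qbin q j (Suc k) * qbin q N (n - k))
        = q ^ Suc n * W"
      unfolding W_def sum_distrib_left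
      by (intro sum.cong refl) (metis atLeastAtMost_iff power_qbin_shift mult.assoc)
    finally have "V (Suc j) (Suc n) = q ^ (Suc j * Suc n) * qbin q N (Suc n) + V j n + q ^ Suc n * W"
      using V_Suc[of "Suc j"] by simp
    also have "\<dots> = V j n + q ^ Suc n * V j (Suc n)"
      unfolding V_Suc W_def by (simp add: power_add algebra_simps)
    also have "\<dots> = qbin q (Suc j + N) (Suc n)"
      using IH unfolding V_def by (simp add: qbin_Suc_Suc)
    finally show ?thesis unfolding V_def \<open>m = Suc n\<close> by simp
  qed
qed

end

section \<open>Deleting the leftmost top vertex\<close>

definition matchings_on :: "int set \<Rightarrow> int set \<Rightarrow> (int \<times> int) set set" where
  "matchings_on S B = {E. E \<subseteq> S \<times> B
      \<and> (\<forall>(a,b)\<in>E. \<forall>(c,d)\<in>E. (a = c \<longleftrightarrow> b = d))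
      \<and> (\<forall>(a,b)\<in>E. \<not> (a < 0 \<and> b < 0))}"

definition crossing_number :: "int set \<Rightarrow> int set \<Rightarrow> (int \<times> int) set \<Rightarrow> nat" where
  "crossing_number S B E =
     card {((a,b),(c,d)). (a,b) \<in> E \<and> (c,d) \<in> E \<and> a < c \<and> d < b}
   + card {((a,b),c). (a,b) \<in> E \<and> c \<in> S - fst ` E \<and> c < a}
   + card {((a,b),d). (a,b) \<in> E \<and> d \<in> B - snd ` E \<and> d < b}"

definition crossings_at :: "int set \<Rightarrow> int set \<Rightarrow> (int \<times> int) set \<Rightarrow> int \<times> int \<Rightarrow> nat" where
  "crossings_at S B E e = card {(c,d)\<in>E. fst e < c \<and> d < snd e}
     + card {c\<in>S - fst ` E. c < fst e} + card {d\<in>B - snd ` E. d < snd e}"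

definition crossing_gf :: "real \<Rightarrow> int set \<Rightarrow> int set \<Rightarrow> nat \<Rightarrow> real" where
  "crossing_gf q S B t = (\<Sum>E\<in>{E\<in>matchings_on S B. card E = t}. q ^ crossing_number S B E)"

lemma matchings_on_subset: "E \<in> matchings_on S B \<Longrightarrow> E \<subseteq> S \<times> B"
  by (simp add: matchings_on_def)

lemma matchings_on_eq_iff:
  "E \<in> matchings_on S B \<Longrightarrow> (a,b) \<in> E \<Longrightarrow> (c,d) \<in> E \<Longrightarrow> a = c \<longleftrightarrow> b = d"
  unfolding matchings_on_def by blast

lemma finite_matchings_on: "finite S \<Longrightarrow> finite B \<Longrightarrow> finite (matchings_on S B)"
  by (rule finite_subset[of _ "Pow (S \<times> B)"]) (auto simp: matchings_on_def)

lemma finite_matching: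
  "E \<in> matchings_on S B \<Longrightarrow> finite S \<Longrightarrow> finite B \<Longrightarrow> finite E"
  by (rule finite_subset[OF matchings_on_subset]) auto

lemma matchings_on_mono:
  "E \<in> matchings_on S B \<Longrightarrow> E' \<subseteq> E \<Longrightarrow> E' \<subseteq> S' \<times> B' \<Longrightarrow> E' \<in> matchings_on S' B'"
  unfolding matchings_on_def by blast

lemma matchings_on_avoiding:
  "x \<in> S \<Longrightarrow> {E\<in>matchings_on S B. x \<notin> fst ` E} = matchings_on (S - {x}) B"
  unfolding matchings_on_def by force

lemma Diff_edge_in_matchings_on:
  assumes E: "E \<in> matchings_on S B" and xb: "(x,b) \<in> E"
  shows "E - {(x,b)} \<in> matchings_on (S - {x}) (B - {b})"
proof -
  have "E - {(x,b)} \<subseteq> (S - {x}) \<times> (B - {b})"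
    using matchings_on_subset[OF E] matchings_on_eq_iff[OF E _ xb] by fast
  then show ?thesis using matchings_on_mono[OF E] by blast
qed

lemma insert_edge_in_matchings_on:
  "E \<in> matchings_on (S - {x}) (B - {b}) \<Longrightarrow> x \<in> S \<Longrightarrow> b \<in> B \<Longrightarrow> \<not> (x < 0 \<and> b < 0)
    \<Longrightarrow> insert (x,b) E \<in> matchings_on S B"
  unfolding matchings_on_def by blast

lemma crossing_number_eq_sum:
  assumes "finite S" "finite B" "E \<subseteq> S \<times> B"
  shows "crossing_number S B E = (\<Sum>e\<in>E. crossings_at S B E e)"
proof -
  have sigma:
    "{((a,b),(c,d)). (a,b) \<in> E \<and> (c,d) \<in> E \<and> a < c \<and> d < b}
      = Sigma E (\<lambda>e. {(c,d)\<in>E. fst e < c \<and> d < snd e})"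
    "{((a,b),c). (a,b) \<in> E \<and> c \<in> S - fst ` E \<and> c < a}
      = Sigma E (\<lambda>e. {c\<in>S - fst ` E. c < fst e})"
    "{((a,b),d). (a,b) \<in> E \<and> d \<in> B - snd ` E \<and> d < b}
      = Sigma E (\<lambda>e. {d\<in>B - snd ` E. d < snd e})"
    by auto
  have "finite E" using assms finite_subset by blast
  then show ?thesis
    unfolding crossing_number_def crossings_at_def sum.distrib sigma
    using assms by (subst card_SigmaI, auto intro: finite_subset)+
qed

lemma crossing_number_Diff_unmatched_min:
  assumes S: "finite S" "x \<in> S" "\<forall>s\<in>S. x \<le> s" and B: "finite B"
    and E: "E \<subseteq> (S - {x}) \<times> B"
  shows "crossing_number S B E = crossing_number (S - {x}) B E + card E"
proof -
  have "crossings_at S B E e = Suc (crossings_at (S - {x}) B E e)" if e: "e \<in> E" for e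
  proof -
    have "x < fst e" "x \<notin> fst ` E"
      using e E S(3) by force+
    then have "{c\<in>S - fst ` E. c < fst e} = insert x {c\<in>(S - {x}) - fst ` E. c < fst e}"
      using S(2) by auto
    moreover have "finite {c\<in>(S - {x}) - fst ` E. c < fst e}"
      using S(1) by simp
    ultimately show ?thesis
      by (simp add: crossings_at_def)
  qed
  then have "(\<Sum>e\<in>E. crossings_at S B E e) = (\<Sum>e\<in>E. crossings_at (S - {x}) B E e + 1)"
    by simp
  also have "\<dots> = (\<Sum>e\<in>E. crossings_at (S - {x}) B E e) + card E"
    by (simp only: sum.distrib card_eq_sum)
  moreover have "E \<subseteq> S \<times> B"
    using E by auto
  ultimately show ?thesis
    using crossing_number_eq_sum[OF S(1) B] crossing_number_eq_sum[of "S - {x}" B E] S(1) B E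
    by simp
qed

lemma crossings_at_matched_min:
  assumes S: "finite S" "x \<in> S" "\<forall>s\<in>S. x \<le> s" and B: "finite B"
    and E: "E \<in> matchings_on S B" and xb: "(x,b) \<in> E"
  shows "crossings_at S B E (x,b) = card {d\<in>B. d < b}"
proof -
  have ESB: "E \<subseteq> S \<times> B" using matchings_on_subset[OF E] .
  have "inj_on snd E"
    by (rule inj_onI) (metis matchings_on_eq_iff[OF E] prod.collapse)
  then have "card {e\<in>E. snd e < b} = card (snd ` {e\<in>E. snd e < b})"
    by (simp add: card_image inj_on_subset)
  moreover have "{(c,d)\<in>E. x < c \<and> d < b} = {e\<in>E. snd e < b}"
    using ESB S matchings_on_eq_iff[OF E _ xb] by fastforce
  moreover have "snd ` {e\<in>E. snd e < b} = {d\<in>snd ` E. d < b}"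
    by auto
  ultimately have edges: "card {(c,d)\<in>E. x < c \<and> d < b} = card {d\<in>snd ` E. d < b}"
    by simp
  have left_top: "{c\<in>S - fst ` E. c < x} = {}"
    using S by force
  have bottom: "card {d\<in>B. d < b} = card {d\<in>snd ` E. d < b} + card {d\<in>B - snd ` E. d < b}"
  proof -
    have "{d\<in>snd ` E. d < b} \<subseteq> B"
      using ESB by auto
    then have "finite {d\<in>snd ` E. d < b}"
      using B finite_subset by blast
    then have "card ({d\<in>snd ` E. d < b} \<union> {d\<in>B - snd ` E. d < b})
        = card {d\<in>snd ` E. d < b} + card {d\<in>B - snd ` E. d < b}"
      using B by (intro card_Un_disjoint) auto
    moreover have "{d\<in>B. d < b} = {d\<in>snd ` E. d < b} \<union> {d\<in>B - snd ` E. d < b}"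
      using ESB by auto
    ultimately show ?thesis by simp
  qed
  show ?thesis
    unfolding crossings_at_def fst_conv snd_conv edges left_top bottom by simp
qed

lemma crossings_at_Diff_matched_min:
  assumes S: "x \<in> S" "\<forall>s\<in>S. x \<le> s"
    and E: "E \<in> matchings_on S B" and xb: "(x,b) \<in> E" and e: "e \<in> E - {(x,b)}"
  shows "crossings_at S B E e = crossings_at (S - {x}) (B - {b}) (E - {(x,b)}) e"
proof -
  have "x \<le> fst e" using e matchings_on_subset[OF E] S by auto
  then have "{(c,d)\<in>E. fst e < c \<and> d < snd e} = {(c,d)\<in>E - {(x,b)}. fst e < c \<and> d < snd e}"
    by auto
  moreover have "S - fst ` E = (S - {x}) - fst ` (E - {(x,b)})"
    using xb by force
  moreover have "B - snd ` E = (B - {b}) - snd ` (E - {(x,b)})"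
    using xb by force
  ultimately show ?thesis
    by (simp add: crossings_at_def)
qed

lemma crossing_number_Diff_matched_min:
  assumes S: "finite S" "x \<in> S" "\<forall>s\<in>S. x \<le> s" and B: "finite B"
    and E: "E \<in> matchings_on S B" and xb: "(x,b) \<in> E"
  shows "crossing_number S B E
    = crossing_number (S - {x}) (B - {b}) (E - {(x,b)}) + card {d\<in>B. d < b}"
proof -
  have "finite E" using finite_matching[OF E S(1) B] .
  then have "(\<Sum>e\<in>E. crossings_at S B E e)
      = crossings_at S B E (x,b) + (\<Sum>e\<in>E - {(x,b)}. crossings_at S B E e)"
    using xb by (simp add: sum.remove)
  also have "\<dots> = card {d\<in>B. d < b}
      + (\<Sum>e\<in>E - {(x,b)}. crossings_at (S - {x}) (B - {b}) (E - {(x,b)}) e)"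
    using crossings_at_matched_min[OF S B E xb] crossings_at_Diff_matched_min[OF S(2,3) E xb]
    by simp
  finally show ?thesis
    using crossing_number_eq_sum[OF S(1) B matchings_on_subset[OF E]]
      crossing_number_eq_sum[of "S - {x}" "B - {b}" "E - {(x,b)}"]
      matchings_on_subset[OF Diff_edge_in_matchings_on[OF E xb]] S(1) B
    by simp
qed

lemma crossing_gf_0: "finite S \<Longrightarrow> finite B \<Longrightarrow> crossing_gf q S B 0 = 1"
proof -
  assume "finite S" "finite B"
  then have "{E\<in>matchings_on S B. card E = 0} = {{}}"
    using finite_matching by (auto simp: matchings_on_def)
  then show ?thesis
    using crossing_number_eq_sum[of S B "{}"] \<open>finite S\<close> \<open>finite B\<close>
    by (simp add: crossing_gf_def)
qed

lemma crossing_gf_empty_Suc: "crossing_gf q {} B (Suc t) = 0"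
proof -
  have "{E\<in>matchings_on {} B. card E = Suc t} = {}"
    by (auto simp: matchings_on_def)
  then show ?thesis
    unfolding crossing_gf_def by (simp only: sum.empty)
qed

lemma sum_matchings_avoiding_min:
  assumes S: "finite S" "x \<in> S" "\<forall>s\<in>S. x \<le> s" and B: "finite B"
  shows "(\<Sum>E\<in>{E\<in>matchings_on S B. card E = Suc t \<and> x \<notin> fst ` E}. q ^ crossing_number S B E)
    = q ^ Suc t * crossing_gf q (S - {x}) B (Suc t)"
proof -
  have "{E\<in>matchings_on S B. card E = Suc t \<and> x \<notin> fst ` E}
      = {E\<in>matchings_on (S - {x}) B. card E = Suc t}"
    using matchings_on_avoiding[OF S(2), of B] by blast
  moreover have "crossing_number S B E = crossing_number (S - {x}) B E + Suc t"
    if "E \<in> matchings_on (S - {x}) B" "card E = Suc t" for E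
    using crossing_number_Diff_unmatched_min[OF S B matchings_on_subset[OF that(1)]] that(2) by simp
  ultimately show ?thesis
    unfolding crossing_gf_def sum_distrib_left by (intro sum.cong) (simp_all add: power_add)
qed

lemma sum_matchings_matching_min:
  assumes S: "finite S" "x \<in> S" "\<forall>s\<in>S. x \<le> s" and B: "finite B" "b \<in> B"
    and allowed: "\<not> (x < 0 \<and> b < 0)"
  shows "(\<Sum>E\<in>{E\<in>matchings_on S B. card E = Suc t \<and> (x,b) \<in> E}. q ^ crossing_number S B E)
    = q ^ card {d\<in>B. d < b} * crossing_gf q (S - {x}) (B - {b}) t"
  unfolding crossing_gf_def sum_distrib_left
proof (rule sum.reindex_bij_witness[where j="\<lambda>E. E - {(x,b)}" and i="insert (x,b)"])
  fix E
  assume "E \<in> {E\<in>matchings_on S B. card E = Suc t \<and> (x,b) \<in> E}"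
  then have E: "E \<in> matchings_on S B" "card E = Suc t" "(x,b) \<in> E" by auto
  show "insert (x,b) (E - {(x,b)}) = E"
    using E(3) by auto
  show "E - {(x,b)} \<in> {E\<in>matchings_on (S - {x}) (B - {b}). card E = t}"
    using Diff_edge_in_matchings_on[OF E(1,3)] E(2,3) finite_matching[OF E(1) S(1) B(1)] by simp
  show "q ^ card {d\<in>B. d < b} * q ^ crossing_number (S - {x}) (B - {b}) (E - {(x,b)})
      = q ^ crossing_number S B E"
    unfolding crossing_number_Diff_matched_min[OF S B(1) E(1,3)] by (simp add: power_add)
next
  fix E
  assume "E \<in> {E\<in>matchings_on (S - {x}) (B - {b}). card E = t}"
  then have E: "E \<in> matchings_on (S - {x}) (B - {b})" "card E = t" by auto
  have "(x,b) \<notin> E"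
    using matchings_on_subset[OF E(1)] by auto
  then show "insert (x,b) E - {(x,b)} = E"
    by simp
  show "insert (x,b) E \<in> {E\<in>matchings_on S B. card E = Suc t \<and> (x,b) \<in> E}"
    using insert_edge_in_matchings_on[OF E(1) S(2) B(2) allowed] \<open>(x,b) \<notin> E\<close> E(2)
      finite_matching[OF E(1)] S(1) B(1) by simp
qed

lemma crossing_gf_Suc:
  assumes S: "finite S" "x \<in> S" "\<forall>s\<in>S. x \<le> s" and B: "finite B"
  shows "crossing_gf q S B (Suc t) = q ^ Suc t * crossing_gf q (S - {x}) B (Suc t)
     + (\<Sum>b\<in>{b\<in>B. \<not> (x < 0 \<and> b < 0)}. q ^ card {d\<in>B. d < b} * crossing_gf q (S - {x}) (B - {b}) t)"
proof -
  define A where "A = {E\<in>matchings_on S B. card E = Suc t}"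
  define N where "N = {E\<in>A. x \<notin> fst ` E}"
  define M where "M b = {E\<in>A. (x,b) \<in> E}" for b
  define U where "U = (\<Union>b\<in>{b\<in>B. \<not> (x < 0 \<and> b < 0)}. M b)"
  define f where "f E = q ^ crossing_number S B E" for E
  have "finite A"
    using finite_matchings_on[OF S(1) B] by (simp add: A_def)
  have "A \<subseteq> N \<union> U"
  proof
    fix E
    assume "E \<in> A"
    then have E: "E \<in> matchings_on S B" by (simp add: A_def)
    show "E \<in> N \<union> U"
    proof (cases "x \<in> fst ` E")
      case True
      then obtain b where "(x,b) \<in> E" by force
      moreover from this have "b \<in> B" "\<not> (x < 0 \<and> b < 0)"
        using E unfolding matchings_on_def by blast+
      ultimately show ?thesis
        using \<open>E \<in> A\<close> by (auto simp: M_def U_def)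
    qed (use \<open>E \<in> A\<close> in \<open>simp add: N_def\<close>)
  qed
  then have "A = N \<union> U"
    by (auto simp: N_def U_def M_def)
  moreover have "N \<subseteq> A" "U \<subseteq> A" "N \<inter> U = {}"
    by (auto simp: N_def U_def M_def image_iff)
  then have "sum f (N \<union> U) = sum f N + sum f U"
    using \<open>finite A\<close> by (intro sum.union_disjoint) (auto intro: finite_subset)
  ultimately have "sum f A = sum f N + sum f U"
    by simp
  also have "sum f U = (\<Sum>b\<in>{b\<in>B. \<not> (x < 0 \<and> b < 0)}. sum f (M b))"
  proof -
    have "M b \<inter> M b' = {}" if "b \<noteq> b'" for b b'
      using that matchings_on_eq_iff[of _ S B x b x b'] by (auto simp: M_def A_def)
    then show ?thesis
      unfolding U_def using B \<open>finite A\<close> by (intro sum.UNION_disjoint) (auto simp: M_def)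
  qed
  also have "sum f N = q ^ Suc t * crossing_gf q (S - {x}) B (Suc t)"
    using sum_matchings_avoiding_min[OF S B, where t=t and q=q]
    unfolding f_def N_def A_def by (simp add: Collect_conj_eq Int_assoc)
  also have "(\<Sum>b\<in>{b\<in>B. \<not> (x < 0 \<and> b < 0)}. sum f (M b))
      = (\<Sum>b\<in>{b\<in>B. \<not> (x < 0 \<and> b < 0)}. q ^ card {d\<in>B. d < b} * crossing_gf q (S - {x}) (B - {b}) t)"
  proof (rule sum.cong)
    fix b
    assume "b \<in> {b\<in>B. \<not> (x < 0 \<and> b < 0)}"
    then show "sum f (M b) = q ^ card {d\<in>B. d < b} * crossing_gf q (S - {x}) (B - {b}) t"
      using sum_matchings_matching_min[OF S B, where b=b and t=t and q=q]
      unfolding f_def M_def A_def by (simp add: Collect_conj_eq Int_assoc)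
  qed simp
  finally show ?thesis
    by (simp add: crossing_gf_def A_def f_def)
qed

section \<open>The closed form\<close>

definition neg_part :: "int set \<Rightarrow> int set" where
  "neg_part X = {x\<in>X. x < 0}"

definition nonneg_part :: "int set \<Rightarrow> int set" where
  "nonneg_part X = {x\<in>X. 0 \<le> x}"

lemma card_neg_part_add_nonneg_part:
  "finite X \<Longrightarrow> card (neg_part X) + card (nonneg_part X) = card X"
  unfolding neg_part_def nonneg_part_def
  by (subst card_Un_disjoint[symmetric]) (auto intro: arg_cong[where f = card])

lemma finite_neg_part [simp]: "finite X \<Longrightarrow> finite (neg_part X)"
  and finite_nonneg_part [simp]: "finite X \<Longrightarrow> finite (nonneg_part X)"
  by (simp_all add: neg_part_def nonneg_part_def)

lemma neg_part_insert_neg: "x < 0 \<Longrightarrow> neg_part (insert x A) = insert x (neg_part A)"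
  and nonneg_part_insert_neg: "x < 0 \<Longrightarrow> nonneg_part (insert x A) = nonneg_part A"
  by (auto simp: neg_part_def nonneg_part_def)

lemma neg_part_Diff_nonneg: "b \<in> nonneg_part B \<Longrightarrow> neg_part (B - {b}) = neg_part B"
  and nonneg_part_Diff: "nonneg_part (B - {b}) = nonneg_part B - {b}"
  by (auto simp: neg_part_def nonneg_part_def)

lemma sum_power_card_less:
  fixes X :: "'a::linorder set" and q :: "'b::comm_semiring_1"
  assumes "finite X"
  shows "(\<Sum>x\<in>X. q ^ card {y\<in>X. y < x}) = (\<Sum>k<card X. q ^ k)"
  using assms
proof (induction X rule: finite_linorder_max_induct)
  case (insert b A)
  have "{y\<in>insert b A. y < x} = {y\<in>A. y < x}" if "x \<in> A" for x
    using that insert.hyps(2) by auto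
  moreover have "{y\<in>insert b A. y < b} = A"
    using insert.hyps(2) by auto
  moreover have "b \<notin> A"
    using insert.hyps(2) by auto
  ultimately show ?case
    using insert by (simp add: add.commute)
qed simp

lemma sum_power_card_less_nonneg_part:
  fixes q :: "'a::comm_semiring_1"
  assumes "finite B"
  shows "(\<Sum>b\<in>nonneg_part B. q ^ card {d\<in>B. d < b})
    = q ^ card (neg_part B) * (\<Sum>k<card (nonneg_part B). q ^ k)"
proof -
  have "card {d\<in>B. d < b} = card (neg_part B) + card {d\<in>nonneg_part B. d < b}"
    if "b \<in> nonneg_part B" for b
  proof -
    have "{d\<in>B. d < b} = neg_part B \<union> {d\<in>nonneg_part B. d < b}"
      using that by (auto simp: neg_part_def nonneg_part_def)
    then show ?thesis
      using assms by (simp add: card_Un_disjoint neg_part_def nonneg_part_def disjoint_iff)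
  qed
  then have "(\<Sum>b\<in>nonneg_part B. q ^ card {d\<in>B. d < b})
      = (\<Sum>b\<in>nonneg_part B. q ^ card (neg_part B) * q ^ card {d\<in>nonneg_part B. d < b})"
    by (intro sum.cong) (simp_all add: power_add)
  also have "\<dots> = q ^ card (neg_part B) * (\<Sum>b\<in>nonneg_part B. q ^ card {d\<in>nonneg_part B. d < b})"
    by (simp add: sum_distrib_left)
  also have "\<dots> = q ^ card (neg_part B) * (\<Sum>k<card (nonneg_part B). q ^ k)"
    using assms sum_power_card_less[of "nonneg_part B" q] by (simp add: nonneg_part_def)
  finally show ?thesis .
qed

text \<open>s1, s2 (b1, b2) count the negative and nonnegative top (bottom) vertices;
  i is the number of edges incident to negative top vertices.\<close>

definition crossing_gf_term :: "real \<Rightarrow> nat \<Rightarrow> nat \<Rightarrow> nat \<Rightarrow> nat \<Rightarrow> nat \<Rightarrow> nat \<Rightarrow> real" where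
  "crossing_gf_term q s1 s2 b1 b2 t i = q ^ ((s1 - i) * (t - i) + b1 * i)
     * qbin q s1 i * qfalling q b2 i * qbin q s2 (t - i) * qfalling q (b1 + b2 - i) (t - i)"

definition crossing_gf_formula :: "real \<Rightarrow> nat \<Rightarrow> nat \<Rightarrow> nat \<Rightarrow> nat \<Rightarrow> nat \<Rightarrow> real" where
  "crossing_gf_formula q s1 s2 b1 b2 t = (\<Sum>i=0..t. crossing_gf_term q s1 s2 b1 b2 t i)"

definition cr_summand :: "real \<Rightarrow> nat \<Rightarrow> nat \<Rightarrow> nat \<Rightarrow> nat \<Rightarrow> nat \<Rightarrow> nat \<Rightarrow> real" where
  "cr_summand q \<alpha> p j t l i =
       q powi (int i * (int l - int i) + (int t - int i) * (int j - int i + int \<alpha>)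
               + (int j - int l + int i) * (int t - int l + int i))
       * (qfact q (t - l + i) * qfact q (t - i) / qfact q (t - l))
       * qbinom q (int p) (int t - int i) * qbinom q (int p) (int t - int l + int i)
       * qbinom q (int \<alpha> + int j) (int i) * qbinom q (int j) (int l - int i)"

lemma sum_triangle_reindex:
  fixes h :: "nat \<Rightarrow> nat \<Rightarrow> 'a::comm_monoid_add"
  shows "(\<Sum>i=0..t. \<Sum>k=0..t - i. h (i + k) i) = (\<Sum>l=0..t. \<Sum>i=0..l. h l i)"
proof -
  have "{(i,k). i + k \<le> t} = Sigma {..t} (\<lambda>i. {..t - i})"
    by auto
  then have "(\<Sum>i=0..t. \<Sum>k=0..t - i. h (i + k) i) = (\<Sum>(i,k)\<in>{(i,k). i + k \<le> t}. h (i + k) i)"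
    by (simp add: sum.Sigma atLeast0AtMost)
  also have "\<dots> = (\<Sum>l\<le>t. \<Sum>i\<le>l. h (i + (l - i)) i)"
    by (rule sum.triangle_reindex_eq)
  finally show ?thesis
    by (simp add: atLeast0AtMost)
qed

context
  fixes q :: real
  assumes q_pos: "0 < q" and q_ne_1: "q \<noteq> 1"
begin

lemma crossing_gf_nonneg_top:
  assumes "finite S" "finite B" "\<forall>s\<in>S. 0 \<le> s"
  shows "crossing_gf q S B t = qbin q (card S) t * qfalling q (card B) t"
  using assms(1,3,2)
proof (induction S arbitrary: B t rule: finite_linorder_min_induct)
  case empty
  then show ?case
    by (cases t) (simp_all add: crossing_gf_0 crossing_gf_empty_Suc q_pos q_ne_1)
next
  case (insert x A)
  show ?case
  proof (cases t)
    case 0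
    then show ?thesis
      using insert by (simp add: crossing_gf_0 q_pos q_ne_1)
  next
    case (Suc t)
    have x: "x \<in> insert x A" "\<forall>s\<in>insert x A. x \<le> s" "insert x A - {x} = A" "x \<notin> A"
      using insert.hyps(2) by auto
    have "{b\<in>B. \<not> (x < 0 \<and> b < 0)} = B"
      using insert.prems(1) by auto
    then have "crossing_gf q (insert x A) B (Suc t)
        = q ^ Suc t * (qbin q (card A) (Suc t) * qfalling q (card B) (Suc t))
          + (\<Sum>b\<in>B. q ^ card {d\<in>B. d < b}) * (qbin q (card A) t * qfalling q (card B - 1) t)"
      using crossing_gf_Suc[of "insert x A" x B q t] insert x
      by (simp add: sum_distrib_right)
    also have "\<dots> = qbin q (Suc (card A)) (Suc t) * qfalling q (card B) (Suc t)"
      using insert.prems(2) q_pos q_ne_1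
      by (simp add: sum_power_card_less qint_eq_sum_power[symmetric] qfalling_Suc_right
          qbin_Suc_Suc algebra_simps)
    finally show ?thesis
      using Suc insert.hyps(1) x(4) by simp
  qed
qed

lemma crossing_gf_formula_0_left:
  "crossing_gf_formula q 0 s2 b1 b2 t = qbin q s2 t * qfalling q (b1 + b2) t"
  by (cases t)
    (simp_all add: crossing_gf_formula_def crossing_gf_term_def q_pos q_ne_1
      sum.atLeast0_atMost_Suc_shift del: sum.cl_ivl_Suc)

lemma crossing_gf_formula_0_right: "crossing_gf_formula q s1 s2 b1 b2 0 = 1"
  by (simp add: crossing_gf_formula_def crossing_gf_term_def q_pos q_ne_1)

lemma crossing_gf_term_Suc_0:
  "crossing_gf_term q (Suc s) s2 b1 b2 (Suc t) 0 = q ^ Suc t * crossing_gf_term q s s2 b1 b2 (Suc t) 0"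
  by (simp add: crossing_gf_term_def q_pos q_ne_1 power_add)

lemma crossing_gf_term_Suc_Suc:
  assumes "i \<le> t"
  shows "crossing_gf_term q (Suc s) s2 b1 b2 (Suc t) (Suc i)
    = q ^ Suc t * crossing_gf_term q s s2 b1 b2 (Suc t) (Suc i)
      + q ^ b1 * qint q b2 * crossing_gf_term q s s2 b1 (b2 - 1) t i"
proof (cases b2)
  case 0
  then show ?thesis
    by (simp add: crossing_gf_term_def qint_def)
next
  case (Suc c)
  have "q ^ ((s - i) * (t - i)) * q ^ Suc i * qbin q s (Suc i)
      = q ^ Suc t * q ^ ((s - Suc i) * (t - i)) * qbin q s (Suc i)"
    using power_qbin_shift[OF q_pos q_ne_1 assms] .
  then show ?thesis
    using Suc q_pos q_ne_1
    by (auto simp: crossing_gf_term_def qbin_Suc_Suc qfalling_Suc_Suc power_add algebra_simps)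
qed

lemma crossing_gf_formula_Suc_Suc:
  "crossing_gf_formula q (Suc s) s2 b1 b2 (Suc t)
    = q ^ Suc t * crossing_gf_formula q s s2 b1 b2 (Suc t)
      + q ^ b1 * qint q b2 * crossing_gf_formula q s s2 b1 (b2 - 1) t"
  unfolding crossing_gf_formula_def sum.atLeast0_atMost_Suc_shift
  by (simp add: crossing_gf_term_Suc_0 crossing_gf_term_Suc_Suc sum.distrib sum_distrib_left
      algebra_simps del: sum.cl_ivl_Suc)

lemma crossing_gf_eq_formula_nonneg_top:
  assumes "finite S" "finite B" "\<forall>s\<in>S. 0 \<le> s"
  shows "crossing_gf q S B t = crossing_gf_formula q (card (neg_part S)) (card (nonneg_part S))
    (card (neg_part B)) (card (nonneg_part B)) t"
proof -
  have "neg_part S = {}" "nonneg_part S = S"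
    using assms(3) by (auto simp: neg_part_def nonneg_part_def)
  then show ?thesis
    using crossing_gf_nonneg_top[OF assms] crossing_gf_formula_0_left
      card_neg_part_add_nonneg_part[OF assms(2)]
    by simp
qed

lemma crossing_gf_eq_formula:
  assumes "finite S" "finite B"
  shows "crossing_gf q S B t = crossing_gf_formula q (card (neg_part S)) (card (nonneg_part S))
    (card (neg_part B)) (card (nonneg_part B)) t"
  using assms
proof (induction S arbitrary: B t rule: finite_linorder_min_induct)
  case empty
  then show ?case
    by (intro crossing_gf_eq_formula_nonneg_top) auto
next
  case (insert x A)
  show ?case
  proof (cases "0 \<le> x")
    case True
    then show ?thesis
      using insert by (intro crossing_gf_eq_formula_nonneg_top) force+
  next
    case False
    have x: "x \<in> insert x A" "\<forall>s\<in>insert x A. x \<le> s" "insert x A - {x} = A"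
      "x \<notin> neg_part A"
      using insert.hyps(2) by (auto simp: neg_part_def)
    have allowed: "{b\<in>B. \<not> (x < 0 \<and> b < 0)} = nonneg_part B"
      using False by (auto simp: nonneg_part_def)
    have IH_Diff: "crossing_gf q A (B - {b}) t
        = crossing_gf_formula q (card (neg_part A)) (card (nonneg_part A))
            (card (neg_part B)) (card (nonneg_part B) - 1) t"
      if "b \<in> nonneg_part B" for b t
      using insert.IH[of "B - {b}" t] insert.prems that
      by (simp add: neg_part_Diff_nonneg nonneg_part_Diff)
    have "crossing_gf q (insert x A) B (Suc t)
        = q ^ Suc t * crossing_gf_formula q (card (neg_part A)) (card (nonneg_part A))
            (card (neg_part B)) (card (nonneg_part B)) (Suc t)
          + (\<Sum>b\<in>nonneg_part B. q ^ card {d\<in>B. d < b})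
            * crossing_gf_formula q (card (neg_part A)) (card (nonneg_part A))
                (card (neg_part B)) (card (nonneg_part B) - 1) t" for t
      using crossing_gf_Suc[of "insert x A" x B q t] insert x allowed IH_Diff
      by (simp add: sum_distrib_right)
    then have "crossing_gf q (insert x A) B (Suc t)
        = crossing_gf_formula q (Suc (card (neg_part A))) (card (nonneg_part A))
            (card (neg_part B)) (card (nonneg_part B)) (Suc t)" for t
      using insert.prems q_ne_1
      by (simp add: sum_power_card_less_nonneg_part crossing_gf_formula_Suc_Suc
          qint_eq_sum_power[symmetric] mult.assoc)
    then show ?thesis
      using insert False x(4)
      by (cases t) (simp_all add: crossing_gf_0 crossing_gf_formula_0_right neg_part_insert_neg
          nonneg_part_insert_neg)
  qed
qed

lemma cr_summand_eq:
  assumes "i + k \<le> t" "i \<le> \<alpha> + j"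
  shows "cr_summand q \<alpha> p j t (i + k) i
    = q ^ ((\<alpha> + j - i) * (t - i) + j * i) * qbin q (\<alpha> + j) i * qbin q p (t - i) * qfact q (t - i)
      * qfalling q p i * (q ^ ((j - k) * (t - i - k)) * qbin q j k * qbin q (p - i) (t - i - k))"
proof (cases "k \<le> j")
  case False
  then show ?thesis
    by (simp add: cr_summand_def qbinom_def)
next
  case True
  define a where "a = t - i - k"
  have "int ((\<alpha> + j - i) * (t - i) + j * i + (j - k) * a)
      = (int \<alpha> + int j - int i) * (int t - int i) + int j * int i + (int j - int k) * (int t - int i - int k)"
    using assms True by (simp add: a_def of_nat_diff)
  then have exponent: "int i * (int (i + k) - int i) + (int t - int i) * (int j - int i + int \<alpha>)
          + (int j - int (i + k) + int i) * (int t - int (i + k) + int i)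
      = int ((\<alpha> + j - i) * (t - i) + j * i + (j - k) * a)"
    by (simp add: algebra_simps)
  have binomials: "qbinom q (int p) (int t - int i) = qbin q p (t - i)"
    "qbinom q (int p) (int t - int (i + k) + int i) = qbin q p (i + a)"
    "qbinom q (int \<alpha> + int j) (int i) = qbin q (\<alpha> + j) i"
    "qbinom q (int j) (int (i + k) - int i) = qbin q j k"
    using assms qbinom_of_nat[of q p "t - i"] qbinom_of_nat[of q p "i + a"]
      qbinom_of_nat[of q "\<alpha> + j" i] qbinom_of_nat[of q j k]
    by (simp_all add: a_def of_nat_diff)
  have indices: "t - (i + k) + i = i + a" "t - (i + k) = a"
    using assms by (simp_all add: a_def)
  have "cr_summand q \<alpha> p j t (i + k) i
      = q ^ ((\<alpha> + j - i) * (t - i) + j * i) * q ^ ((j - k) * a)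
        * (qfact q (i + a) / qfact q a * qbin q p (i + a)) * qfact q (t - i)
        * qbin q p (t - i) * qbin q (\<alpha> + j) i * qbin q j k"
    unfolding cr_summand_def exponent binomials indices power_int_of_nat power_add
    by (simp add: ac_simps)
  also have "\<dots> = q ^ ((\<alpha> + j - i) * (t - i) + j * i) * qbin q (\<alpha> + j) i * qbin q p (t - i)
      * qfact q (t - i) * qfalling q p i * (q ^ ((j - k) * a) * qbin q j k * qbin q (p - i) a)"
    unfolding qfalling_mult_qbin[OF q_pos q_ne_1, symmetric] by (simp only: ac_simps)
  finally show ?thesis
    unfolding a_def .
qed

lemma crossing_gf_term_eq_sum_cr_summand:
  assumes "i \<le> t"
  shows "crossing_gf_term q (\<alpha> + j) p j p t i = (\<Sum>k=0..t - i. cr_summand q \<alpha> p j t (i + k) i)"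
proof (cases "i \<le> \<alpha> + j \<and> i \<le> p")
  case False
  then consider "\<not> i \<le> \<alpha> + j" | "i \<le> \<alpha> + j" "\<not> i \<le> p"
    by blast
  then show ?thesis
  proof cases
    case 1
    then show ?thesis
      by (simp add: crossing_gf_term_def cr_summand_def qbinom_def)
  next
    case 2
    then show ?thesis
      using cr_summand_eq assms by (simp add: crossing_gf_term_def)
  qed
next
  case True
  define X where "X = q ^ ((\<alpha> + j - i) * (t - i) + j * i) * qbin q (\<alpha> + j) i * qbin q p (t - i)
    * qfact q (t - i) * qfalling q p i"
  have "j + p - i = j + (p - i)"
    using True by simp
  then have "crossing_gf_term q (\<alpha> + j) p j p t i = X * qbin q (j + (p - i)) (t - i)"
    unfolding crossing_gf_term_def X_def qfalling_def[of q "j + p - i"] by (simp only: ac_simps)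
  also have "\<dots> = (\<Sum>k=0..t - i. X * (q ^ ((j - k) * (t - i - k)) * qbin q j k * qbin q (p - i) (t - i - k)))"
    unfolding qbin_Vandermonde[OF q_pos q_ne_1] sum_distrib_left by (simp only: ac_simps)
  also have "\<dots> = (\<Sum>k=0..t - i. cr_summand q \<alpha> p j t (i + k) i)"
    using assms True by (intro sum.cong) (simp_all add: cr_summand_eq X_def)
  finally show ?thesis .
qed

end

theorem mainTheorem12:
  fixes q :: real and \<alpha> p j t :: nat
  assumes "0 < q" "q < 1" "t \<le> p"
  shows "(\<Sum>M\<in>matchings_l \<alpha> p j t. q ^ cr \<alpha> p j M) =
    (\<Sum>l = 0..t. \<Sum>i = 0..l.
       q powi (int i * (int l - int i) + (int t - int i) * (int j - int i + int \<alpha>)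
               + (int j - int l + int i) * (int t - int l + int i))
       * (qfact q (t - l + i) * qfact q (t - i) / qfact q (t - l))
       * qbinom q (int p) (int t - int i) * qbinom q (int p) (int t - int l + int i)
       * qbinom q (int \<alpha> + int j) (int i) * qbinom q (int j) (int l - int i))"
proof -
  have q: "0 < q" "q \<noteq> 1"
    using assms by simp_all
  have "(\<Sum>M\<in>matchings_l \<alpha> p j t. q ^ cr \<alpha> p j M) = crossing_gf q (top_row \<alpha> p j) (bot_row p j) t"
    unfolding crossing_gf_def matchings_l_def matchings_def matchings_on_def cr_def crossing_number_def ..
  also have "\<dots> = crossing_gf_formula q (\<alpha> + j) p j p t"
  proof -
    have "neg_part (top_row \<alpha> p j) = {-(int \<alpha> + int j)..-1}"
      "nonneg_part (top_row \<alpha> p j) = {1..int p}"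
      "neg_part (bot_row p j) = {-(int j)..-1}"
      "nonneg_part (bot_row p j) = {1..int p}"
      by (auto simp: top_row_def bot_row_def neg_part_def nonneg_part_def)
    then show ?thesis
      using crossing_gf_eq_formula[OF q, of "top_row \<alpha> p j" "bot_row p j" t]
      by (simp add: top_row_def bot_row_def nat_int_add)
  qed
  also have "\<dots> = (\<Sum>i=0..t. \<Sum>k=0..t - i. cr_summand q \<alpha> p j t (i + k) i)"
    unfolding crossing_gf_formula_def
    by (intro sum.cong) (simp_all add: crossing_gf_term_eq_sum_cr_summand[OF q])
  also have "\<dots> = (\<Sum>l=0..t. \<Sum>i=0..l. cr_summand q \<alpha> p j t l i)"
    by (rule sum_triangle_reindex)
  finally show ?thesis
    unfolding cr_summand_def .
qed

end
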